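(* Let $\mathbb{K}$ be an algebraically closed field of characteristic zero and $N=2m\ge 2$ even. Then $\operatorname{Der}(\mathcal{H}_{N}')\cong \mathcal{H}_{N}'\rtimes \mathfrak{h}\cong \mathcal{H}_{N}$.
   Context: Let $A_N=\mathbb{K}[t_1^{\pm1},\dots,t_N^{\pm1}]$, $d_i=t_i\frac{\partial}{\partial t_i}$, and $t^{\bm r}=t_1^{r_1}\cdots t_N^{r_N}$ for $\bm r\in\mathbb{Z}^N$. Let $(\cdot,\cdot)$ be the standard bilinear form on $\mathbb{K}^N$, $(e_i,e_j)=\delta_{ij}$. For $u\in\mathbb{K}^N$, $\bm r\in\mathbb{Z}^N$ put $D(u,\bm r)=\sum_i u_i t^{\bm r}d_i$. Let $\bm J=\begin{pmatrix} O_m & I_m\\ -I_m & O_m\end{pmatrix}$, $\overline{\bm r}=\bm J\bm r$, $h_{\bm r}=D(\overline{\bm r},\bm r)$ (so $h_{\bm 0}=0$), $\mathfrak h=\operatorname{span}_{\mathbb{K}}\{d_1,\dots,d_N\}$. The Hamiltonian Lie algebra is $\mathcal{H}_N=\operatorname{span}_{\mathbb{K}}\{h_{\bm r}:\bm r\ne\bm 0\}\oplus\mathfrak h$ with commutator bracket, $[h_{\bm r},h_{\bm s}]=(\overline{\bm r},\bm s)h_{\bm r+\bm s}$, $[D(u,\bm 0),h_{\bm r}]=(u,\bm r)h_{\bm r}$; its derived subalgebra is $\mathcal{H}_N'=\operatorname{span}_{\mathbb{K}}\{h_{\bm r}:\bm r\ne\bm 0\}$, an ideal, and $\mathfrak h$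 acts on it by the adjoint action. $\operatorname{Der}$ denotes the Lie algebra of derivations. *)

theory Defs
  imports "HOL-Computational_Algebra.Polynomial" "HOL-Library.FuncSet"
begin

definition alg_closed :: "'k::field itself \<Rightarrow> bool" where
  "alg_closed _ \<longleftrightarrow> (\<forall>p :: 'k poly. degree p > 0 \<longrightarrow> (\<exists>x. poly p x = 0))"

text \<open>Vectors of Z^N are functions nat => int vanishing at indices >= N.
  Coordinates are 0-based: index i corresponds to t_(i+1).\<close>

definition zvecs :: "nat \<Rightarrow> (nat \<Rightarrow> int) set" where
  "zvecs N = {r. \<forall>i\<ge>N. r i = 0}"

definition zero_vec :: "nat \<Rightarrow> int" where
  "zero_vec = (\<lambda>_. 0)"

definition vec_plus :: "(nat \<Rightarrow> int) \<Rightarrow> (nat \<Rightarrow> int) \<Rightarrow> (nat \<Rightarrow> int)" where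
  "vec_plus r s = (\<lambda>i. r i + s i)"

text \<open>symp m r s = (J r, s) with J = [[0, I_m], [-I_m, 0]], N = 2m.\<close>
definition symp :: "nat \<Rightarrow> (nat \<Rightarrow> int) \<Rightarrow> (nat \<Rightarrow> int) \<Rightarrow> int" where
  "symp m r s = (\<Sum>i<m. r (i + m) * s i - r i * s (i + m))"

section \<open>The derived algebra H_N' (coordinates w.r.t. the basis h_r, r ~= 0)\<close>

definition Hp_carrier :: "nat \<Rightarrow> ((nat \<Rightarrow> int) \<Rightarrow> 'k::field) set" where
  "Hp_carrier N = {f. finite {r. f r \<noteq> 0} \<and> (\<forall>r. f r \<noteq> 0 \<longrightarrow> r \<in> zvecs N \<and> r \<noteq> zero_vec)}"

definition vadd :: "('a \<Rightarrow> 'k::field) \<Rightarrow> ('a \<Rightarrow> 'k) \<Rightarrow> ('a \<Rightarrow> 'k)" where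
  "vadd f g = (\<lambda>r. f r + g r)"

definition vsmult :: "'k::field \<Rightarrow> ('a \<Rightarrow> 'k) \<Rightarrow> ('a \<Rightarrow> 'k)" where
  "vsmult c f = (\<lambda>r. c * f r)"

text \<open>Bilinear extension of [h_r, h_s] = (rbar, s) h_(r+s) (with h_0 = 0).\<close>
definition Hp_bracket :: "nat \<Rightarrow> ((nat \<Rightarrow> int) \<Rightarrow> 'k::field) \<Rightarrow> ((nat \<Rightarrow> int) \<Rightarrow> 'k) \<Rightarrow> ((nat \<Rightarrow> int) \<Rightarrow> 'k)" where
  "Hp_bracket m f g = (\<lambda>t. if t = zero_vec then 0 else
     (\<Sum>r\<in>{r. f r \<noteq> 0}. \<Sum>s\<in>{s. g s \<noteq> 0}.
        if vec_plus r s = t then of_int (symp m r s) * f r * g s else 0))"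

definition hvecs :: "nat \<Rightarrow> (nat \<Rightarrow> 'k::field) set" where
  "hvecs N = {u. \<forall>i\<ge>N. u i = 0}"

definition pairing :: "nat \<Rightarrow> (nat \<Rightarrow> 'k::field) \<Rightarrow> (nat \<Rightarrow> int) \<Rightarrow> 'k" where
  "pairing N u r = (\<Sum>i<N. u i * of_int (r i))"

text \<open>act N u = ad(D(u,0)) restricted to H_N': h_r |-> (u,r) h_r.\<close>
definition act :: "nat \<Rightarrow> (nat \<Rightarrow> 'k::field) \<Rightarrow> ((nat \<Rightarrow> int) \<Rightarrow> 'k) \<Rightarrow> ((nat \<Rightarrow> int) \<Rightarrow> 'k)" where
  "act N u f = (\<lambda>r. pairing N u r * f r)"

definition lie_iso ::
  "'a set \<Rightarrow> ('a \<Rightarrow> 'a \<Rightarrow> 'a) \<Rightarrow> ('k \<Rightarrow> 'a \<Rightarrow> 'a) \<Rightarrow> ('a \<Rightarrow> 'a \<Rightarrow> 'a) \<Rightarrow>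
   'b set \<Rightarrow> ('b \<Rightarrow> 'b \<Rightarrow> 'b) \<Rightarrow> ('k \<Rightarrow> 'b \<Rightarrow> 'b) \<Rightarrow> ('b \<Rightarrow> 'b \<Rightarrow> 'b) \<Rightarrow>
   ('a \<Rightarrow> 'b) \<Rightarrow> bool" where
  "lie_iso A addA smA brA B addB smB brB \<phi> \<longleftrightarrow>
     bij_betw \<phi> A B \<and>
     (\<forall>x\<in>A. \<forall>y\<in>A. \<phi> (addA x y) = addB (\<phi> x) (\<phi> y)) \<and>
     (\<forall>c. \<forall>x\<in>A. \<phi> (smA c x) = smB c (\<phi> x)) \<and>
     (\<forall>x\<in>A. \<forall>y\<in>A. \<phi> (brA x y) = brB (\<phi> x) (\<phi> y))"

definition Der_Hp :: "nat \<Rightarrow> (((nat \<Rightarrow> int) \<Rightarrow> 'k::field) \<Rightarrow> ((nat \<Rightarrow> int) \<Rightarrow> 'k)) set" where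
  "Der_Hp m = {D. D \<in> extensional (Hp_carrier (2*m)) \<and>
      (\<forall>x\<in>Hp_carrier (2*m). D x \<in> Hp_carrier (2*m)) \<and>
      (\<forall>x\<in>Hp_carrier (2*m). \<forall>y\<in>Hp_carrier (2*m). D (vadd x y) = vadd (D x) (D y)) \<and>
      (\<forall>c. \<forall>x\<in>Hp_carrier (2*m). D (vsmult c x) = vsmult c (D x)) \<and>
      (\<forall>x\<in>Hp_carrier (2*m). \<forall>y\<in>Hp_carrier (2*m).
          D (Hp_bracket m x y) = vadd (Hp_bracket m (D x) y) (Hp_bracket m x (D y)))}"

definition Der_add :: "nat \<Rightarrow> (((nat \<Rightarrow> int) \<Rightarrow> 'k::field) \<Rightarrow> ((nat \<Rightarrow> int) \<Rightarrow> 'k)) \<Rightarrow> _ \<Rightarrow> _" where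
  "Der_add m D E = restrict (\<lambda>x. vadd (D x) (E x)) (Hp_carrier (2*m))"

definition Der_smult :: "nat \<Rightarrow> 'k::field \<Rightarrow> (((nat \<Rightarrow> int) \<Rightarrow> 'k) \<Rightarrow> ((nat \<Rightarrow> int) \<Rightarrow> 'k)) \<Rightarrow> _" where
  "Der_smult m c D = restrict (\<lambda>x. vsmult c (D x)) (Hp_carrier (2*m))"

definition Der_bracket :: "nat \<Rightarrow> (((nat \<Rightarrow> int) \<Rightarrow> 'k::field) \<Rightarrow> ((nat \<Rightarrow> int) \<Rightarrow> 'k)) \<Rightarrow> _ \<Rightarrow> _" where
  "Der_bracket m D E = restrict (\<lambda>x. vadd (D (E x)) (vsmult (-1) (E (D x)))) (Hp_carrier (2*m))"

definition pair_add :: "(('a \<Rightarrow> 'k::field) \<times> ('b \<Rightarrow> 'k)) \<Rightarrow> _ \<Rightarrow> _" where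
  "pair_add p q = (vadd (fst p) (fst q), vadd (snd p) (snd q))"

definition pair_smult :: "'k::field \<Rightarrow> (('a \<Rightarrow> 'k) \<times> ('b \<Rightarrow> 'k)) \<Rightarrow> _" where
  "pair_smult c p = (vsmult c (fst p), vsmult c (snd p))"

definition semidirect_bracket ::
  "('x \<Rightarrow> 'x \<Rightarrow> 'x) \<Rightarrow> ('u \<Rightarrow> 'u \<Rightarrow> 'u) \<Rightarrow> ('u \<Rightarrow> 'x \<Rightarrow> 'x) \<Rightarrow>
   ('x \<Rightarrow> 'x \<Rightarrow> 'x) \<Rightarrow> ('x \<Rightarrow> 'x) \<Rightarrow> ('x \<times> 'u) \<Rightarrow> ('x \<times> 'u) \<Rightarrow> ('x \<times> 'u)" where
  "semidirect_bracket brL brH rho addL negL p q =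
     (addL (addL (brL (fst p) (fst q)) (rho (snd p) (fst q))) (negL (rho (snd q) (fst p))),
      brH (snd p) (snd q))"

definition SD_carrier :: "nat \<Rightarrow> (((nat \<Rightarrow> int) \<Rightarrow> 'k::field) \<times> (nat \<Rightarrow> 'k)) set" where
  "SD_carrier m = Hp_carrier (2*m) \<times> hvecs (2*m)"

definition SD_bracket :: "nat \<Rightarrow> (((nat \<Rightarrow> int) \<Rightarrow> 'k::field) \<times> (nat \<Rightarrow> 'k)) \<Rightarrow> _ \<Rightarrow> _" where
  "SD_bracket m = semidirect_bracket (Hp_bracket m) (\<lambda>u v. (\<lambda>_. 0)) (act (2*m)) vadd (vsmult (-1))"

text \<open>An element is a pair (f, u) standing for sum_r f(r) h_r + D(u,0).
  Bracket: bilinear extension of [h_r,h_s] = (rbar,s) h_(r+s),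
  [D(u,0),h_r] = (u,r) h_r, [D(u,0),D(v,0)] = 0.\<close>

definition Ham_carrier :: "nat \<Rightarrow> (((nat \<Rightarrow> int) \<Rightarrow> 'k::field) \<times> (nat \<Rightarrow> 'k)) set" where
  "Ham_carrier m = Hp_carrier (2*m) \<times> hvecs (2*m)"

definition Ham_bracket :: "nat \<Rightarrow> (((nat \<Rightarrow> int) \<Rightarrow> 'k::field) \<times> (nat \<Rightarrow> 'k)) \<Rightarrow> _ \<Rightarrow> _" where
  "Ham_bracket m p q =
     (\<lambda>r. Hp_bracket m (fst p) (fst q) r + pairing (2*m) (snd p) r * fst q r
           - pairing (2*m) (snd q) r * fst p r,
      \<lambda>_. 0)"

end

theory Submission
  imports Defs
begin

(* Write D h_r = sum_a c_r(a) h_(r+a) for a derivation D of H'_N. Applying D to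
   [h_r, h_s] = (rbar, s) h_(r+s) gives, for every fixed degree a, a functional equation in r and s.
   In degree 0 it says that r |-> c_r(0) is additive on all pairs with (rbar, s) /= 0; this already
   forces additivity everywhere, so c_r(0) = (u, r) with u_i = c_(e_i)(0). In degree a /= 0 the
   function r |-> c_r(a) - x_a (abar, r) satisfies the homogeneous version of the equation, and x_a
   is chosen so that it vanishes at some e_j with (abar, e_j) /= 0; comparing the values at s,
   e_j + s and 2 e_j + s shows that it vanishes identically. Hence D = ad x + ad D(u,0), and (x, u)
   can be read off from this derivation, so (x, u) |-> ad x + ad D(u,0) is an isomorphism from the
   semidirect product onto Der(H'_N). The bracket of the semidirect product is literally that of
   H_N. *)

definition unit_vec :: "nat \<Rightarrow> nat \<Rightarrow> int" where
  "unit_vec j = (\<lambda>k. if k = j then 1 else 0)"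

definition vec_neg :: "(nat \<Rightarrow> int) \<Rightarrow> nat \<Rightarrow> int" where
  "vec_neg r = (\<lambda>i. - r i)"

definition vec_scale :: "int \<Rightarrow> (nat \<Rightarrow> int) \<Rightarrow> nat \<Rightarrow> int" where
  "vec_scale k r = (\<lambda>i. k * r i)"

lemma vec_plus_commute: "vec_plus a b = vec_plus b a"
  by (simp add: vec_plus_def add.commute)

lemma vec_plus_assoc: "vec_plus (vec_plus a b) c = vec_plus a (vec_plus b c)"
  by (simp add: vec_plus_def add.assoc)

lemma vec_plus_left_commute: "vec_plus a (vec_plus b c) = vec_plus b (vec_plus a c)"
  by (simp add: vec_plus_def algebra_simps)

lemma vec_plus_zero [simp]: "vec_plus a zero_vec = a" "vec_plus zero_vec a = a"
  by (simp_all add: vec_plus_def zero_vec_def)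

lemma vec_plus_right_cancel [simp]: "vec_plus a s = vec_plus b s \<longleftrightarrow> a = b"
  by (auto simp: vec_plus_def fun_eq_iff)

lemma vec_plus_left_cancel [simp]: "vec_plus s a = vec_plus s b \<longleftrightarrow> a = b"
  by (auto simp: vec_plus_def fun_eq_iff)

lemma vec_plus_eq_self_iff [simp]: "vec_plus a r = r \<longleftrightarrow> a = zero_vec"
  by (auto simp: vec_plus_def fun_eq_iff zero_vec_def)

lemma vec_plus_neg_cancel: "vec_plus (vec_plus s (vec_neg r)) r = s"
  by (simp add: vec_plus_def vec_neg_def)

lemma vec_plus_neg_self: "vec_plus r (vec_neg r) = zero_vec"
  by (simp add: vec_plus_def vec_neg_def zero_vec_def)

lemma unit_vec_nonzero [simp]: "unit_vec j \<noteq> zero_vec"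
  by (auto simp: unit_vec_def zero_vec_def fun_eq_iff)

lemma zvecs_zero [simp]: "zero_vec \<in> zvecs N"
  by (simp add: zvecs_def zero_vec_def)

lemma zvecs_plus [intro]: "a \<in> zvecs N \<Longrightarrow> b \<in> zvecs N \<Longrightarrow> vec_plus a b \<in> zvecs N"
  by (simp add: zvecs_def vec_plus_def)

lemma zvecs_plus_cancel: "vec_plus a b \<in> zvecs N \<Longrightarrow> b \<in> zvecs N \<Longrightarrow> a \<in> zvecs N"
  by (simp add: zvecs_def vec_plus_def)

lemma zvecs_neg [intro]: "a \<in> zvecs N \<Longrightarrow> vec_neg a \<in> zvecs N"
  by (simp add: zvecs_def vec_neg_def)

lemma zvecs_scale [intro]: "a \<in> zvecs N \<Longrightarrow> vec_scale k a \<in> zvecs N"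
  by (simp add: zvecs_def vec_scale_def)

lemma zvecs_unit_vec [intro]: "j < N \<Longrightarrow> unit_vec j \<in> zvecs N"
  by (simp add: zvecs_def unit_vec_def)

lemma nonzero_coord_less: "r \<in> zvecs N \<Longrightarrow> r j \<noteq> 0 \<Longrightarrow> j < N"
  by (auto simp: zvecs_def) (meson not_le)

lemma symp_add_left: "symp m (vec_plus a b) c = symp m a c + symp m b c"
  by (simp add: symp_def vec_plus_def sum.distrib[symmetric] algebra_simps)

lemma symp_add_right: "symp m c (vec_plus a b) = symp m c a + symp m c b"
  by (simp add: symp_def vec_plus_def sum.distrib[symmetric] algebra_simps)

lemma symp_antisym: "symp m b a = - symp m a b"
  by (simp add: symp_def sum_negf[symmetric] algebra_simps)

lemma symp_self [simp]: "symp m a a = 0"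
  using symp_antisym[of m a a] by simp

lemma symp_zero [simp]: "symp m zero_vec a = 0" "symp m a zero_vec = 0"
  by (simp_all add: symp_def zero_vec_def)

lemma symp_scale_right: "symp m a (vec_scale k b) = k * symp m a b"
  by (simp add: symp_def vec_scale_def sum_distrib_left algebra_simps)

lemma symp_eq_0_if_sum_zero: "vec_plus a b = zero_vec \<Longrightarrow> symp m a b = 0"
proof -
  assume "vec_plus a b = zero_vec"
  then have "b = vec_neg a"
    by (auto simp: vec_plus_def zero_vec_def vec_neg_def fun_eq_iff eq_neg_iff_add_eq_0 add.commute)
  then show ?thesis by (simp add: symp_def vec_neg_def)
qed

lemma symp_unit_vec_low: "j < m \<Longrightarrow> symp m a (unit_vec j) = a (j + m)"
proof -
  assume j: "j < m"
  have "symp m a (unit_vec j) = (\<Sum>i<m. if i = j then a (i + m) else 0)"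
    unfolding symp_def unit_vec_def using j by (intro sum.cong) auto
  then show ?thesis using j by simp
qed

lemma symp_unit_vec_high: "j < m \<Longrightarrow> symp m a (unit_vec (j + m)) = - a j"
proof -
  assume j: "j < m"
  have "symp m a (unit_vec (j + m)) = (\<Sum>i<m. if i = j then - a i else 0)"
    unfolding symp_def unit_vec_def by (rule sum.cong) auto
  then show ?thesis using j by simp
qed

lemma exists_symp_unit_vec_nonzero:
  assumes "a \<in> zvecs (2*m)" "a \<noteq> zero_vec"
  shows "\<exists>j<2*m. symp m a (unit_vec j) \<noteq> 0"
proof -
  obtain i where i: "a i \<noteq> 0" using assms(2) by (auto simp: zero_vec_def fun_eq_iff)
  have "i < 2*m" using nonzero_coord_less[OF assms(1) i] .
  show ?thesis
  proof (cases "i < m")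
    case True
    then show ?thesis using symp_unit_vec_high[of i m a] i by (intro exI[of _ "i + m"]) auto
  next
    case False
    then obtain j where "i = j + m" "j < m" using \<open>i < 2*m\<close>
      by (metis add.commute le_add_diff_inverse mult_2 nat_add_left_cancel_less not_less)
    then show ?thesis using symp_unit_vec_low[of j m a] i by (intro exI[of _ j]) auto
  qed
qed

lemma pairing_add: "pairing N u (vec_plus r s) = pairing N u r + pairing N u s"
  by (simp add: pairing_def vec_plus_def sum.distrib[symmetric] algebra_simps)

lemma pairing_zero_vec [simp]: "pairing N u zero_vec = 0"
  by (simp add: pairing_def zero_vec_def)

lemma pairing_unit_vec: "i < N \<Longrightarrow> pairing N u (unit_vec i) = u i"
proof -
  assume i: "i < N"
  have "pairing N u (unit_vec i) = (\<Sum>k<N. if k = i then u k else 0)"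
    unfolding pairing_def unit_vec_def by (rule sum.cong) auto
  then show ?thesis using i by simp
qed

lemma pairing_vadd: "pairing N (vadd u v) r = pairing N u r + pairing N v r"
  by (simp add: pairing_def vadd_def sum.distrib[symmetric] algebra_simps)

lemma pairing_vsmult: "pairing N (vsmult c u) r = c * pairing N u r"
  by (simp add: pairing_def vsmult_def sum_distrib_left algebra_simps)

section \<open>The algebra H'_N\<close>

lemma Hp_carrierI:
  "finite {r. f r \<noteq> 0} \<Longrightarrow> (\<And>r. f r \<noteq> 0 \<Longrightarrow> r \<in> zvecs N \<and> r \<noteq> zero_vec) \<Longrightarrow> f \<in> Hp_carrier N"
  unfolding Hp_carrier_def by blast

lemma Hp_carrier_finite: "f \<in> Hp_carrier N \<Longrightarrow> finite {r. f r \<noteq> 0}"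
  by (simp add: Hp_carrier_def)

lemma Hp_carrier_support: "f \<in> Hp_carrier N \<Longrightarrow> f r \<noteq> 0 \<Longrightarrow> r \<in> zvecs N \<and> r \<noteq> zero_vec"
  unfolding Hp_carrier_def by blast

lemma Hp_carrier_zero_at_zero [simp]: "f \<in> Hp_carrier N \<Longrightarrow> f zero_vec = 0"
  by (auto simp: Hp_carrier_def)

lemma Hp_carrier_zero_outside: "f \<in> Hp_carrier N \<Longrightarrow> r \<notin> zvecs N \<Longrightarrow> f r = 0"
  by (auto simp: Hp_carrier_def)

lemma Hp_carrier_zero [simp]: "(\<lambda>_. 0) \<in> Hp_carrier N"
  by (simp add: Hp_carrier_def)

lemma Hp_carrier_mono_support:
  assumes "f \<in> Hp_carrier N" "\<And>r. g r \<noteq> 0 \<Longrightarrow> f r \<noteq> 0"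
  shows "g \<in> Hp_carrier N"
proof (rule Hp_carrierI)
  show "finite {r. g r \<noteq> 0}"
    using assms by (blast intro: finite_subset[OF _ Hp_carrier_finite[OF assms(1)]])
qed (use assms Hp_carrier_support in blast)

lemma Hp_vsmult [intro]: "f \<in> Hp_carrier N \<Longrightarrow> vsmult c f \<in> Hp_carrier N"
  by (erule Hp_carrier_mono_support) (simp add: vsmult_def)

lemma act_closed [intro]: "f \<in> Hp_carrier N \<Longrightarrow> act N' u f \<in> Hp_carrier N"
  by (erule Hp_carrier_mono_support) (simp add: act_def)

lemma Hp_vadd [intro]: "f \<in> Hp_carrier N \<Longrightarrow> g \<in> Hp_carrier N \<Longrightarrow> vadd f g \<in> Hp_carrier N"
proof (rule Hp_carrierI)
  assume f: "f \<in> Hp_carrier N" and g: "g \<in> Hp_carrier N"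
  have "{r. vadd f g r \<noteq> 0} \<subseteq> {r. f r \<noteq> 0} \<union> {r. g r \<noteq> 0}" by (auto simp: vadd_def)
  then show "finite {r. vadd f g r \<noteq> 0}"
    using Hp_carrier_finite[OF f] Hp_carrier_finite[OF g] by (meson finite_Un finite_subset)
  fix r assume "vadd f g r \<noteq> 0"
  then have "f r \<noteq> 0 \<or> g r \<noteq> 0" by (auto simp: vadd_def)
  then show "r \<in> zvecs N \<and> r \<noteq> zero_vec" using Hp_carrier_support[OF f] Hp_carrier_support[OF g] by blast
qed

text \<open>The basis vector h_r; it is the zero vector when r = 0 or r lies outside Z^(2m), in accordance
  with h_0 = 0.\<close>

definition hbasis :: "nat \<Rightarrow> (nat \<Rightarrow> int) \<Rightarrow> (nat \<Rightarrow> int) \<Rightarrow> 'k::field" where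
  "hbasis m r = (\<lambda>t. if t = r \<and> r \<in> zvecs (2*m) \<and> r \<noteq> zero_vec then 1 else 0)"

lemma hbasis_in_Hp [intro, simp]: "hbasis m r \<in> Hp_carrier (2*m)"
proof (rule Hp_carrierI)
  have "{t. (hbasis m r t :: 'a) \<noteq> 0} \<subseteq> {r}" by (auto simp: hbasis_def)
  then show "finite {t. (hbasis m r t :: 'a) \<noteq> 0}" by (rule finite_subset) simp
qed (simp add: hbasis_def split: if_splits)

lemma hbasis_degenerate: "r \<notin> zvecs (2*m) \<or> r = zero_vec \<Longrightarrow> hbasis m r = (\<lambda>_. 0)"
  by (auto simp: hbasis_def fun_eq_iff)

lemma hbasis_shifted:
  "r \<in> zvecs (2*m) \<Longrightarrow> r \<noteq> zero_vec \<Longrightarrow> hbasis m r (vec_plus a r) = (if a = zero_vec then 1 else 0)"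
  by (simp add: hbasis_def)

lemma act_hbasis: "act N u (hbasis m r) = vsmult (pairing N u r) (hbasis m r)"
proof
  fix t show "act N u (hbasis m r) t = vsmult (pairing N u r) (hbasis m r) t"
    by (cases "t = r") (simp_all add: act_def vsmult_def hbasis_def)
qed

lemma Hp_bracket_eq_sum_over:
  assumes "finite A" "finite B" "{r. f r \<noteq> 0} \<subseteq> A" "{s. g s \<noteq> 0} \<subseteq> B"
  shows "Hp_bracket m f g t = (if t = zero_vec then 0 else
     (\<Sum>r\<in>A. \<Sum>s\<in>B. if vec_plus r s = t then of_int (symp m r s) * f r * g s else 0))"
proof -
  let ?G = "\<lambda>r s. if vec_plus r s = t then of_int (symp m r s) * f r * g s else 0"
  have inner: "(\<Sum>s\<in>{s. g s \<noteq> 0}. ?G r s) = (\<Sum>s\<in>B. ?G r s)" for r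
    using assms by (intro sum.mono_neutral_left) auto
  have vanish: "(\<Sum>s\<in>B. ?G r s) = 0" if "f r = 0" for r
    using that by (intro sum.neutral) simp
  have outer: "(\<Sum>r\<in>{r. f r \<noteq> 0}. \<Sum>s\<in>B. ?G r s) = (\<Sum>r\<in>A. \<Sum>s\<in>B. ?G r s)"
    using assms vanish by (intro sum.mono_neutral_left) auto
  show ?thesis unfolding Hp_bracket_def using inner outer by simp
qed

lemma Hp_bracket_antisym: "Hp_bracket m g f = vsmult (-1) (Hp_bracket m f g)"
proof -
  have swap: "(if vec_plus r s = t then of_int (symp m r s) * g r * f s else 0) =
      - (if vec_plus s r = t then of_int (symp m s r) * f s * g r else 0)" for r s t
    by (simp add: vec_plus_commute[of r s] symp_antisym[of m r s])
  have "Hp_bracket m g f t = - Hp_bracket m f g t" for t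
    unfolding Hp_bracket_def swap sum.swap[of _ "{r. g r \<noteq> 0}"] by (simp add: sum_negf)
  then show ?thesis by (simp add: vsmult_def fun_eq_iff)
qed

lemma Hp_bracket_add_left:
  assumes "f \<in> Hp_carrier N" "f' \<in> Hp_carrier N" "g \<in> Hp_carrier N"
  shows "Hp_bracket m (vadd f f') g = vadd (Hp_bracket m f g) (Hp_bracket m f' g)"
proof -
  let ?A = "{r. f r \<noteq> 0} \<union> {r. f' r \<noteq> 0}" and ?B = "{s. g s \<noteq> 0}"
  have fin: "finite ?A" "finite ?B" using assms by (auto dest: Hp_carrier_finite)
  show ?thesis
    apply (simp add: fun_eq_iff vadd_def)
    apply (subst (1 2 3) Hp_bracket_eq_sum_over[where A = ?A and B = ?B])
    using fin by (auto simp: vadd_def sum.distrib[symmetric] algebra_simps intro!: sum.cong)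
qed

lemma Hp_bracket_smult_left:
  assumes "f \<in> Hp_carrier N" "g \<in> Hp_carrier N"
  shows "Hp_bracket m (vsmult c f) g = vsmult c (Hp_bracket m f g)"
proof -
  let ?A = "{r. f r \<noteq> 0}" and ?B = "{s. g s \<noteq> 0}"
  have fin: "finite ?A" "finite ?B" using assms by (auto dest: Hp_carrier_finite)
  show ?thesis
    apply (simp add: fun_eq_iff vsmult_def)
    apply (subst (1 2) Hp_bracket_eq_sum_over[where A = ?A and B = ?B])
    using fin by (auto simp: vsmult_def sum_distrib_left algebra_simps intro!: sum.cong)
qed

lemma Hp_bracket_add_right:
  assumes "f \<in> Hp_carrier N" "g \<in> Hp_carrier N" "g' \<in> Hp_carrier N"
  shows "Hp_bracket m f (vadd g g') = vadd (Hp_bracket m f g) (Hp_bracket m f g')"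
  by (simp add: Hp_bracket_antisym[of m f] Hp_bracket_add_left[OF assms(2,3,1)])
    (simp add: vsmult_def vadd_def fun_eq_iff algebra_simps)

lemma Hp_bracket_smult_right:
  assumes "f \<in> Hp_carrier N" "g \<in> Hp_carrier N"
  shows "Hp_bracket m f (vsmult c g) = vsmult c (Hp_bracket m f g)"
  by (simp add: Hp_bracket_antisym[of m f] Hp_bracket_smult_left[OF assms(2,1)])
    (simp add: vsmult_def fun_eq_iff algebra_simps)

lemma Hp_bracket_closed [intro]:
  assumes "f \<in> Hp_carrier N" "g \<in> Hp_carrier N"
  shows "Hp_bracket m f g \<in> Hp_carrier N"
proof -
  let ?A = "{r. f r \<noteq> 0}" and ?B = "{s. g s \<noteq> 0}"
  have sub: "{t. Hp_bracket m f g t \<noteq> 0} \<subseteq> (\<lambda>(r, s). vec_plus r s) ` (?A \<times> ?B)"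
  proof
    fix t assume "t \<in> {t. Hp_bracket m f g t \<noteq> 0}"
    then have "(\<Sum>r\<in>?A. \<Sum>s\<in>?B. if vec_plus r s = t then of_int (symp m r s) * f r * g s else 0) \<noteq> 0"
      by (simp add: Hp_bracket_def split: if_splits)
    then obtain r where r: "r \<in> ?A"
      and nz: "(\<Sum>s\<in>?B. if vec_plus r s = t then of_int (symp m r s) * f r * g s else 0) \<noteq> 0"
      by (rule sum.not_neutral_contains_not_neutral)
    from nz obtain s where "s \<in> ?B"
      and "(if vec_plus r s = t then of_int (symp m r s) * f r * g s else 0) \<noteq> 0"
      by (rule sum.not_neutral_contains_not_neutral)
    then have "s \<in> ?B" "vec_plus r s = t" by (auto split: if_splits)
    with r show "t \<in> (\<lambda>(r, s). vec_plus r s) ` (?A \<times> ?B)" by force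
  qed
  show ?thesis
  proof (rule Hp_carrierI)
    have "finite ?A" "finite ?B" using assms by (auto dest: Hp_carrier_finite)
    then show "finite {t. Hp_bracket m f g t \<noteq> 0}" by (intro finite_subset[OF sub]) auto
    fix t assume t: "Hp_bracket m f g t \<noteq> 0"
    then have "t \<in> (\<lambda>(r, s). vec_plus r s) ` (?A \<times> ?B)" using sub by auto
    then obtain r s where "r \<in> ?A" "s \<in> ?B" "t = vec_plus r s" by auto
    then have "t \<in> zvecs N" using assms by (auto simp: Hp_carrier_def)
    moreover have "t \<noteq> zero_vec" using t by (auto simp: Hp_bracket_def)
    ultimately show "t \<in> zvecs N \<and> t \<noteq> zero_vec" by simp
  qed
qed

lemma Hp_bracket_hbasis_right:
  assumes "f \<in> Hp_carrier (2*m)" "s \<in> zvecs (2*m)"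
  shows "Hp_bracket m f (hbasis m s) (vec_plus a s) = of_int (symp m a s) * f a"
proof (cases "s = zero_vec \<or> vec_plus a s = zero_vec")
  case True
  then show ?thesis
  proof
    assume "s = zero_vec"
    then show ?thesis by (simp add: Hp_bracket_def hbasis_degenerate)
  next
    assume "vec_plus a s = zero_vec"
    then show ?thesis by (simp add: Hp_bracket_def symp_eq_0_if_sum_zero)
  qed
next
  case False
  let ?A = "{r. f r \<noteq> 0} \<union> {a}"
  have fin: "finite ?A" using assms by (auto dest: Hp_carrier_finite)
  have "Hp_bracket m f (hbasis m s) (vec_plus a s) = (\<Sum>r\<in>?A. \<Sum>s'\<in>{s}.
     if vec_plus r s' = vec_plus a s then of_int (symp m r s') * f r * hbasis m s s' else 0)"
    using False fin assms
    by (subst Hp_bracket_eq_sum_over[where A = ?A and B = "{s}"]) (auto simp: hbasis_def)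
  also have "\<dots> = (\<Sum>r\<in>?A. if r = a then of_int (symp m a s) * f a else 0)"
    using False assms by (intro sum.cong refl) (auto simp: hbasis_def)
  also have "\<dots> = of_int (symp m a s) * f a" using fin by simp
  finally show ?thesis .
qed

lemma Hp_bracket_hbasis_left:
  assumes "g \<in> Hp_carrier (2*m)" "r \<in> zvecs (2*m)"
  shows "Hp_bracket m (hbasis m r) g (vec_plus r b) = of_int (symp m r b) * g b"
  using Hp_bracket_hbasis_right[OF assms, of b]
  by (simp add: Hp_bracket_antisym[of m "hbasis m r"] vsmult_def vec_plus_commute symp_antisym[of m b])

lemma Hp_bracket_hbasis_hbasis:
  assumes "r \<in> zvecs (2*m)" "s \<in> zvecs (2*m)"
  shows "Hp_bracket m (hbasis m r) (hbasis m s) = vsmult (of_int (symp m r s)) (hbasis m (vec_plus r s))"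
proof
  fix t
  obtain a where t: "t = vec_plus a s" using vec_plus_neg_cancel by metis
  show "Hp_bracket m (hbasis m r) (hbasis m s) t = vsmult (of_int (symp m r s)) (hbasis m (vec_plus r s)) t"
    using assms unfolding t Hp_bracket_hbasis_right[OF hbasis_in_Hp assms(2)]
    by (auto simp: vsmult_def hbasis_def symp_eq_0_if_sum_zero)
qed

definition Hp_linear :: "nat \<Rightarrow> (((nat \<Rightarrow> int) \<Rightarrow> 'k::field) \<Rightarrow> ((nat \<Rightarrow> int) \<Rightarrow> 'k)) \<Rightarrow> bool" where
  "Hp_linear m F \<longleftrightarrow>
     (\<forall>x\<in>Hp_carrier (2*m). \<forall>y\<in>Hp_carrier (2*m). F (vadd x y) = vadd (F x) (F y)) \<and>
     (\<forall>c. \<forall>x\<in>Hp_carrier (2*m). F (vsmult c x) = vsmult c (F x))"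

lemma Hp_carrier_induct [consumes 1, case_names zero add_basis]:
  fixes P :: "((nat \<Rightarrow> int) \<Rightarrow> 'k::field) \<Rightarrow> bool"
  assumes "y \<in> Hp_carrier (2*m)" "P (\<lambda>_. 0)"
    and step: "\<And>y r c. y \<in> Hp_carrier (2*m) \<Longrightarrow> r \<in> zvecs (2*m) \<Longrightarrow> r \<noteq> zero_vec \<Longrightarrow> P y
       \<Longrightarrow> P (vadd y (vsmult c (hbasis m r)))"
  shows "P y"
proof -
  have "\<forall>y \<in> Hp_carrier (2*m). {r. y r \<noteq> 0} = S \<longrightarrow> P y" if "finite S" for S
    using that
  proof (induction S rule: finite_induct)
    case empty
    have "y = (\<lambda>_. 0)" if "{r. y r \<noteq> 0} = {}" for y :: "(nat \<Rightarrow> int) \<Rightarrow> 'k"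
      using that by (auto simp: fun_eq_iff)
    then show ?case using assms(2) by blast
  next
    case (insert a S)
    show ?case
    proof (intro ballI impI)
      fix y :: "(nat \<Rightarrow> int) \<Rightarrow> 'k"
      assume y: "y \<in> Hp_carrier (2*m)" and supp: "{r. y r \<noteq> 0} = insert a S"
      let ?y' = "y(a := 0)"
      have supp': "{r. ?y' r \<noteq> 0} = S" using supp insert.hyps(2) by auto
      have y': "?y' \<in> Hp_carrier (2*m)"
        using y by (rule Hp_carrier_mono_support) (simp split: if_splits)
      have a: "a \<in> zvecs (2*m)" "a \<noteq> zero_vec" using Hp_carrier_support[OF y] supp by auto
      have "y t = vadd ?y' (vsmult (y a) (hbasis m a)) t" for t
        using a by (cases "t = a") (simp_all add: vadd_def vsmult_def hbasis_def)
      then have "y = vadd ?y' (vsmult (y a) (hbasis m a))" ..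
      then show "P y" using step[OF y' a] insert.IH y' supp' by metis
    qed
  qed
  then show ?thesis using assms(1) Hp_carrier_finite[OF assms(1)] by blast
qed

lemma Hp_linear_zero: "Hp_linear m F \<Longrightarrow> F (\<lambda>_. 0) = (\<lambda>_. 0)"
proof -
  assume "Hp_linear m F"
  then have "F (vsmult 0 (\<lambda>_. 0)) = vsmult 0 (F (\<lambda>_. 0))"
    unfolding Hp_linear_def using Hp_carrier_zero by blast
  then show ?thesis by (simp add: vsmult_def)
qed

lemma Hp_linear_eq_on_basis:
  assumes F: "Hp_linear m F" and G: "Hp_linear m G"
    and basis: "\<And>r. r \<in> zvecs (2*m) \<Longrightarrow> r \<noteq> zero_vec \<Longrightarrow> F (hbasis m r) = G (hbasis m r)"
    and x: "x \<in> Hp_carrier (2*m)"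
  shows "F x = G x"
  using x
proof (induction rule: Hp_carrier_induct)
  case zero
  show ?case using Hp_linear_zero[OF F] Hp_linear_zero[OF G] by simp
next
  case (add_basis y r c)
  have "F (vadd y (vsmult c (hbasis m r))) = vadd (F y) (vsmult c (F (hbasis m r)))"
    using F add_basis unfolding Hp_linear_def by (metis hbasis_in_Hp Hp_vsmult)
  moreover have "G (vadd y (vsmult c (hbasis m r))) = vadd (G y) (vsmult c (G (hbasis m r)))"
    using G add_basis unfolding Hp_linear_def by (metis hbasis_in_Hp Hp_vsmult)
  ultimately show ?case using add_basis basis by simp
qed

lemma Hp_bilinear_eq_on_basis:
  assumes "\<And>y. y \<in> Hp_carrier (2*m) \<Longrightarrow> Hp_linear m (\<lambda>x. F x y)"
    and "\<And>x. x \<in> Hp_carrier (2*m) \<Longrightarrow> Hp_linear m (F x)"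
    and "\<And>y. y \<in> Hp_carrier (2*m) \<Longrightarrow> Hp_linear m (\<lambda>x. G x y)"
    and "\<And>x. x \<in> Hp_carrier (2*m) \<Longrightarrow> Hp_linear m (G x)"
    and "\<And>r s. r \<in> zvecs (2*m) \<Longrightarrow> r \<noteq> zero_vec \<Longrightarrow> s \<in> zvecs (2*m) \<Longrightarrow> s \<noteq> zero_vec
       \<Longrightarrow> F (hbasis m r) (hbasis m s) = G (hbasis m r) (hbasis m s)"
    and "x \<in> Hp_carrier (2*m)" "y \<in> Hp_carrier (2*m)"
  shows "F x y = G x y"
proof -
  have "F x (hbasis m s) = G x (hbasis m s)" if "s \<in> zvecs (2*m)" "s \<noteq> zero_vec" for s
    using assms(1)[OF hbasis_in_Hp] assms(3)[OF hbasis_in_Hp] assms(5)[OF _ _ that] assms(6)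
    by (rule Hp_linear_eq_on_basis)
  with assms(2)[OF assms(6)] assms(4)[OF assms(6)] show ?thesis
    using assms(7) by (rule Hp_linear_eq_on_basis)
qed

lemma Hp_linear_bracket_left: "y \<in> Hp_carrier (2*m) \<Longrightarrow> Hp_linear m (\<lambda>x. Hp_bracket m x y)"
  unfolding Hp_linear_def by (simp add: Hp_bracket_add_left Hp_bracket_smult_left)

lemma Hp_linear_bracket_right: "x \<in> Hp_carrier (2*m) \<Longrightarrow> Hp_linear m (Hp_bracket m x)"
  unfolding Hp_linear_def by (simp add: Hp_bracket_add_right Hp_bracket_smult_right)

lemma Hp_linear_act: "Hp_linear m (act N u)"
  unfolding Hp_linear_def by (simp add: act_def vadd_def vsmult_def fun_eq_iff algebra_simps)

lemma Hp_linear_vadd: "Hp_linear m F \<Longrightarrow> Hp_linear m G \<Longrightarrow> Hp_linear m (\<lambda>x. vadd (F x) (G x))"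
  unfolding Hp_linear_def by (simp add: vadd_def vsmult_def fun_eq_iff algebra_simps)

lemma Hp_linear_comp:
  fixes F G :: "((nat \<Rightarrow> int) \<Rightarrow> 'k::field) \<Rightarrow> ((nat \<Rightarrow> int) \<Rightarrow> 'k)"
  assumes F: "Hp_linear m F" and G: "Hp_linear m G"
    and closed: "\<And>x. x \<in> Hp_carrier (2*m) \<Longrightarrow> G x \<in> Hp_carrier (2*m)"
  shows "Hp_linear m (\<lambda>x. F (G x))"
  unfolding Hp_linear_def
proof (intro conjI ballI allI)
  fix x y :: "(nat \<Rightarrow> int) \<Rightarrow> 'k" assume "x \<in> Hp_carrier (2*m)" "y \<in> Hp_carrier (2*m)"
  with assms show "F (G (vadd x y)) = vadd (F (G x)) (F (G y))" unfolding Hp_linear_def by simp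
next
  fix c and x :: "(nat \<Rightarrow> int) \<Rightarrow> 'k" assume "x \<in> Hp_carrier (2*m)"
  with assms show "F (G (vsmult c x)) = vsmult c (F (G x))" unfolding Hp_linear_def by simp
qed

lemma Hp_linear_bracket_comp_left:
  assumes "z \<in> Hp_carrier (2*m)" "Hp_linear m G" "\<And>x. x \<in> Hp_carrier (2*m) \<Longrightarrow> G x \<in> Hp_carrier (2*m)"
  shows "Hp_linear m (\<lambda>x. Hp_bracket m (G x) z)"
  by (rule Hp_linear_comp[OF Hp_linear_bracket_left[OF assms(1)] assms(2,3)])

lemma Hp_linear_bracket_comp_right:
  assumes "y \<in> Hp_carrier (2*m)" "Hp_linear m G" "\<And>x. x \<in> Hp_carrier (2*m) \<Longrightarrow> G x \<in> Hp_carrier (2*m)"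
  shows "Hp_linear m (\<lambda>x. Hp_bracket m y (G x))"
  by (rule Hp_linear_comp[OF Hp_linear_bracket_right[OF assms(1)] assms(2,3)])

section \<open>The Jacobi identity and the derivations ad D(u,0)\<close>

lemma symp_jacobi:
  "symp m s t * symp m r (vec_plus s t) =
   symp m r s * symp m (vec_plus r s) t + symp m r t * symp m s (vec_plus r t)"
  by (simp add: symp_add_left symp_add_right symp_antisym[of m r s] algebra_simps)

lemma Hp_bracket_jacobi_hbasis:
  assumes r: "r \<in> zvecs (2*m)" and s: "s \<in> zvecs (2*m)" and t: "t \<in> zvecs (2*m)"
  shows "Hp_bracket m (hbasis m r) (Hp_bracket m (hbasis m s) (hbasis m t)) =
    (vadd (Hp_bracket m (Hp_bracket m (hbasis m r) (hbasis m s)) (hbasis m t))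
      (Hp_bracket m (hbasis m s) (Hp_bracket m (hbasis m r) (hbasis m t))) :: (nat \<Rightarrow> int) \<Rightarrow> 'k::field)"
proof -
  have sums: "vec_plus s t \<in> zvecs (2*m)" "vec_plus r s \<in> zvecs (2*m)" "vec_plus r t \<in> zvecs (2*m)"
    using r s t by auto
  define h :: "(nat \<Rightarrow> int) \<Rightarrow> 'k" where "h = hbasis m (vec_plus r (vec_plus s t))"
  have l: "Hp_bracket m (hbasis m r) (Hp_bracket m (hbasis m s) (hbasis m t)) =
     vsmult (of_int (symp m s t)) (vsmult (of_int (symp m r (vec_plus s t))) h)"
    unfolding h_def using r s t sums
    by (simp add: Hp_bracket_hbasis_hbasis Hp_bracket_smult_right[OF hbasis_in_Hp hbasis_in_Hp])
  have r1: "Hp_bracket m (Hp_bracket m (hbasis m r) (hbasis m s)) (hbasis m t) =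
     vsmult (of_int (symp m r s)) (vsmult (of_int (symp m (vec_plus r s) t)) h)"
    unfolding h_def using r s t sums
    by (simp add: Hp_bracket_hbasis_hbasis Hp_bracket_smult_left[OF hbasis_in_Hp hbasis_in_Hp] vec_plus_assoc)
  have r2: "Hp_bracket m (hbasis m s) (Hp_bracket m (hbasis m r) (hbasis m t)) =
     vsmult (of_int (symp m r t)) (vsmult (of_int (symp m s (vec_plus r t))) h)"
    unfolding h_def using r s t sums
    by (simp add: Hp_bracket_hbasis_hbasis Hp_bracket_smult_right[OF hbasis_in_Hp hbasis_in_Hp]
        vec_plus_left_commute[of s r])
  have "(of_int (symp m s t) * of_int (symp m r (vec_plus s t)) :: 'k) =
     of_int (symp m r s) * of_int (symp m (vec_plus r s) t) + of_int (symp m r t) * of_int (symp m s (vec_plus r t))"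
    using arg_cong[OF symp_jacobi[of m s t r], of "of_int :: int \<Rightarrow> 'k"] by simp
  then show ?thesis unfolding l r1 r2
    by (simp add: vadd_def vsmult_def fun_eq_iff mult.assoc[symmetric] flip: distrib_right)
qed

lemma Hp_bracket_jacobi:
  assumes x: "x \<in> Hp_carrier (2*m)" and y: "y \<in> Hp_carrier (2*m)" and z: "z \<in> Hp_carrier (2*m)"
  shows "Hp_bracket m x (Hp_bracket m y z) =
    vadd (Hp_bracket m (Hp_bracket m x y) z) (Hp_bracket m y (Hp_bracket m x z))"
proof -
  have on_basis: "Hp_bracket m x (Hp_bracket m (hbasis m s) (hbasis m t)) =
    vadd (Hp_bracket m (Hp_bracket m x (hbasis m s)) (hbasis m t))
      (Hp_bracket m (hbasis m s) (Hp_bracket m x (hbasis m t)))"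
    if x: "x \<in> Hp_carrier (2*m)" and st: "s \<in> zvecs (2*m)" "t \<in> zvecs (2*m)" for x s t
  proof (rule Hp_linear_eq_on_basis[OF _ _ _ x])
    show "Hp_linear m (\<lambda>x. Hp_bracket m x (Hp_bracket m (hbasis m s) (hbasis m t)))"
      by (intro Hp_linear_bracket_left Hp_bracket_closed hbasis_in_Hp)
    show "Hp_linear m (\<lambda>x. vadd (Hp_bracket m (Hp_bracket m x (hbasis m s)) (hbasis m t))
       (Hp_bracket m (hbasis m s) (Hp_bracket m x (hbasis m t))))"
      by (rule Hp_linear_vadd[OF Hp_linear_bracket_comp_left[OF hbasis_in_Hp Hp_linear_bracket_left[OF hbasis_in_Hp]]
            Hp_linear_bracket_comp_right[OF hbasis_in_Hp Hp_linear_bracket_left[OF hbasis_in_Hp]]])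
        auto
  qed (use Hp_bracket_jacobi_hbasis st in blast)
  show ?thesis
  proof (rule Hp_bilinear_eq_on_basis[where F = "\<lambda>y z. Hp_bracket m x (Hp_bracket m y z)"
      and G = "\<lambda>y z. vadd (Hp_bracket m (Hp_bracket m x y) z) (Hp_bracket m y (Hp_bracket m x z))"])
    show "Hp_linear m (\<lambda>y. Hp_bracket m x (Hp_bracket m y z))" if "z \<in> Hp_carrier (2*m)" for z
      by (rule Hp_linear_bracket_comp_right[OF x Hp_linear_bracket_left[OF that]]) (use that in auto)
    show "Hp_linear m (\<lambda>z. Hp_bracket m x (Hp_bracket m y z))" if "y \<in> Hp_carrier (2*m)" for y
      by (rule Hp_linear_bracket_comp_right[OF x Hp_linear_bracket_right[OF that]]) (use that in auto)
    show "Hp_linear m (\<lambda>y. vadd (Hp_bracket m (Hp_bracket m x y) z) (Hp_bracket m y (Hp_bracket m x z)))"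
      if "z \<in> Hp_carrier (2*m)" for z
      by (rule Hp_linear_vadd[OF Hp_linear_bracket_comp_left[OF that Hp_linear_bracket_right[OF x]]
            Hp_linear_bracket_left]) (use that x in auto)
    show "Hp_linear m (\<lambda>z. vadd (Hp_bracket m (Hp_bracket m x y) z) (Hp_bracket m y (Hp_bracket m x z)))"
      if "y \<in> Hp_carrier (2*m)" for y
      by (rule Hp_linear_vadd[OF Hp_linear_bracket_right
            Hp_linear_bracket_comp_right[OF that Hp_linear_bracket_right[OF x]]]) (use that x in auto)
  qed (use x y z on_basis in auto)
qed

lemma act_vsmult: "act N u (vsmult c f) = vsmult c (act N u f)"
  by (simp add: act_def vsmult_def fun_eq_iff algebra_simps)

lemma act_bracket:
  assumes "x \<in> Hp_carrier (2*m)" "y \<in> Hp_carrier (2*m)"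
  shows "act (2*m) u (Hp_bracket m x y) =
    vadd (Hp_bracket m (act (2*m) u x) y) (Hp_bracket m x (act (2*m) u y))"
proof (rule Hp_bilinear_eq_on_basis[where F = "\<lambda>x y. act (2*m) u (Hp_bracket m x y)"
      and G = "\<lambda>x y. vadd (Hp_bracket m (act (2*m) u x) y) (Hp_bracket m x (act (2*m) u y))", OF _ _ _ _ _ assms])
  show "Hp_linear m (\<lambda>x. act (2*m) u (Hp_bracket m x y))" if "y \<in> Hp_carrier (2*m)" for y
    by (rule Hp_linear_comp[OF Hp_linear_act Hp_linear_bracket_left[OF that]]) (use that in auto)
  show "Hp_linear m (\<lambda>y. act (2*m) u (Hp_bracket m x y))" if "x \<in> Hp_carrier (2*m)" for x
    by (rule Hp_linear_comp[OF Hp_linear_act Hp_linear_bracket_right[OF that]]) (use that in auto)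
  show "Hp_linear m (\<lambda>x. vadd (Hp_bracket m (act (2*m) u x) y) (Hp_bracket m x (act (2*m) u y)))"
    if "y \<in> Hp_carrier (2*m)" for y
    by (rule Hp_linear_vadd[OF Hp_linear_bracket_comp_left[OF that Hp_linear_act] Hp_linear_bracket_left])
      (use that in auto)
  show "Hp_linear m (\<lambda>y. vadd (Hp_bracket m (act (2*m) u x) y) (Hp_bracket m x (act (2*m) u y)))"
    if "x \<in> Hp_carrier (2*m)" for x
    by (rule Hp_linear_vadd[OF Hp_linear_bracket_right Hp_linear_bracket_comp_right[OF that Hp_linear_act]])
      (use that in auto)
  fix r s assume r: "r \<in> zvecs (2*m)" and s: "s \<in> zvecs (2*m)"
  have lhs: "act (2*m) u (Hp_bracket m (hbasis m r) (hbasis m s)) =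
     vsmult (of_int (symp m r s)) (vsmult (pairing (2*m) u (vec_plus r s)) (hbasis m (vec_plus r s)))"
    using r s by (simp add: Hp_bracket_hbasis_hbasis act_vsmult act_hbasis)
  have rhs: "vadd (Hp_bracket m (act (2*m) u (hbasis m r)) (hbasis m s))
       (Hp_bracket m (hbasis m r) (act (2*m) u (hbasis m s))) =
     vadd (vsmult (pairing (2*m) u r) (vsmult (of_int (symp m r s)) (hbasis m (vec_plus r s))))
          (vsmult (pairing (2*m) u s) (vsmult (of_int (symp m r s)) (hbasis m (vec_plus r s))))"
    using r s by (simp add: act_hbasis Hp_bracket_smult_left[OF hbasis_in_Hp hbasis_in_Hp]
        Hp_bracket_smult_right[OF hbasis_in_Hp hbasis_in_Hp] Hp_bracket_hbasis_hbasis)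
  show "act (2*m) u (Hp_bracket m (hbasis m r) (hbasis m s)) =
     vadd (Hp_bracket m (act (2*m) u (hbasis m r)) (hbasis m s))
       (Hp_bracket m (hbasis m r) (act (2*m) u (hbasis m s)))"
    unfolding lhs rhs by (simp add: vadd_def vsmult_def fun_eq_iff pairing_add algebra_simps)
qed

definition sd_to_der ::
  "nat \<Rightarrow> (((nat \<Rightarrow> int) \<Rightarrow> 'k::field) \<times> (nat \<Rightarrow> 'k)) \<Rightarrow> (((nat \<Rightarrow> int) \<Rightarrow> 'k) \<Rightarrow> ((nat \<Rightarrow> int) \<Rightarrow> 'k))" where
  "sd_to_der m p = restrict (\<lambda>y. vadd (Hp_bracket m (fst p) y) (act (2*m) (snd p) y)) (Hp_carrier (2*m))"

lemma sd_to_der_apply: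
  "y \<in> Hp_carrier (2*m) \<Longrightarrow> sd_to_der m (x, u) y = vadd (Hp_bracket m x y) (act (2*m) u y)"
  by (simp add: sd_to_der_def)

lemma sd_to_der_closed:
  "x \<in> Hp_carrier (2*m) \<Longrightarrow> y \<in> Hp_carrier (2*m) \<Longrightarrow> sd_to_der m (x, u) y \<in> Hp_carrier (2*m)"
  by (auto simp: sd_to_der_apply)

lemma Hp_linear_sd_to_der: "x \<in> Hp_carrier (2*m) \<Longrightarrow> Hp_linear m (sd_to_der m (x, u))"
  using Hp_linear_vadd[OF Hp_linear_bracket_right Hp_linear_act]
  unfolding Hp_linear_def by (simp add: sd_to_der_apply Hp_vadd Hp_vsmult)

lemma sd_to_der_in_Der:
  assumes "p \<in> SD_carrier m"
  shows "sd_to_der m p \<in> Der_Hp m"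
proof -
  obtain x u where p: "p = (x, u)" by (cases p)
  have x: "x \<in> Hp_carrier (2*m)" using assms p by (simp add: SD_carrier_def)
  have "sd_to_der m p (Hp_bracket m y z) =
      vadd (Hp_bracket m (sd_to_der m p y) z) (Hp_bracket m y (sd_to_der m p z))"
    if y: "y \<in> Hp_carrier (2*m)" and z: "z \<in> Hp_carrier (2*m)" for y z
  proof -
    have "sd_to_der m p (Hp_bracket m y z) =
        vadd (Hp_bracket m x (Hp_bracket m y z)) (act (2*m) u (Hp_bracket m y z))"
      using y z p by (simp add: sd_to_der_apply Hp_bracket_closed)
    also have "\<dots> = vadd (vadd (Hp_bracket m (Hp_bracket m x y) z) (Hp_bracket m y (Hp_bracket m x z)))
         (vadd (Hp_bracket m (act (2*m) u y) z) (Hp_bracket m y (act (2*m) u z)))"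
      using Hp_bracket_jacobi[OF x y z] act_bracket[OF y z] by simp
    also have "\<dots> = vadd (Hp_bracket m (vadd (Hp_bracket m x y) (act (2*m) u y)) z)
         (Hp_bracket m y (vadd (Hp_bracket m x z) (act (2*m) u z)))"
      using x y z
      by (simp add: Hp_bracket_add_left[where N = "2*m"] Hp_bracket_add_right[where N = "2*m"]
          Hp_bracket_closed act_closed) (simp add: vadd_def fun_eq_iff algebra_simps)
    also have "\<dots> = vadd (Hp_bracket m (sd_to_der m p y) z) (Hp_bracket m y (sd_to_der m p z))"
      using y z p by (simp add: sd_to_der_apply)
    finally show ?thesis .
  qed
  then show ?thesis
    using Hp_linear_sd_to_der[OF x, of u] sd_to_der_closed[OF x] p
    unfolding Der_Hp_def Hp_linear_def by (auto simp: sd_to_der_def)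
qed

lemma sd_to_der_add:
  assumes "p \<in> SD_carrier m" "q \<in> SD_carrier m"
  shows "sd_to_der m (pair_add p q) = Der_add m (sd_to_der m p) (sd_to_der m q)"
proof
  fix y
  show "sd_to_der m (pair_add p q) y = Der_add m (sd_to_der m p) (sd_to_der m q) y"
  proof (cases "y \<in> Hp_carrier (2*m)")
    case True
    then have "Hp_bracket m (vadd (fst p) (fst q)) y = vadd (Hp_bracket m (fst p) y) (Hp_bracket m (fst q) y)"
      using assms by (intro Hp_bracket_add_left) (auto simp: SD_carrier_def)
    with True show ?thesis
      by (simp add: sd_to_der_def Der_add_def pair_add_def vadd_def act_def pairing_vadd[unfolded vadd_def]
          fun_eq_iff algebra_simps)
  qed (simp add: sd_to_der_def Der_add_def)
qed

lemma sd_to_der_smult: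
  assumes "p \<in> SD_carrier m"
  shows "sd_to_der m (pair_smult c p) = Der_smult m c (sd_to_der m p)"
proof
  fix y
  show "sd_to_der m (pair_smult c p) y = Der_smult m c (sd_to_der m p) y"
  proof (cases "y \<in> Hp_carrier (2*m)")
    case True
    then have "Hp_bracket m (vsmult c (fst p)) y = vsmult c (Hp_bracket m (fst p) y)"
      using assms by (intro Hp_bracket_smult_left) (auto simp: SD_carrier_def)
    with True show ?thesis
      by (simp add: sd_to_der_def Der_smult_def pair_smult_def vadd_def vsmult_def act_def
          pairing_vsmult[unfolded vsmult_def] fun_eq_iff algebra_simps)
  qed (simp add: sd_to_der_def Der_smult_def)
qed

lemma sd_to_der_SD_bracket_at:
  assumes x: "x \<in> Hp_carrier (2*m)" and x': "x' \<in> Hp_carrier (2*m)" and y: "y \<in> Hp_carrier (2*m)"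
  shows "sd_to_der m (SD_bracket m (x, u) (x', u')) y t =
    Hp_bracket m (Hp_bracket m x x') y t + Hp_bracket m (act (2*m) u x') y t
    - Hp_bracket m (act (2*m) u' x) y t"
proof -
  let ?W = "vadd (vadd (Hp_bracket m x x') (act (2*m) u x')) (vsmult (-1) (act (2*m) u' x))"
  have "SD_bracket m (x, u) (x', u') = (?W, \<lambda>_. 0)"
    by (simp add: SD_bracket_def semidirect_bracket_def)
  moreover have "Hp_bracket m ?W y = vadd (vadd (Hp_bracket m (Hp_bracket m x x') y)
      (Hp_bracket m (act (2*m) u x') y)) (vsmult (-1) (Hp_bracket m (act (2*m) u' x) y))"
    using x x' y by (simp add: Hp_bracket_add_left[where N = "2*m"] Hp_bracket_smult_left[where N = "2*m"]
        Hp_bracket_closed act_closed Hp_vadd Hp_vsmult)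
  ultimately show ?thesis
    using y by (simp add: sd_to_der_apply vadd_def vsmult_def act_def pairing_def)
qed

lemma Der_bracket_sd_to_der_at:
  assumes x: "x \<in> Hp_carrier (2*m)" and x': "x' \<in> Hp_carrier (2*m)" and y: "y \<in> Hp_carrier (2*m)"
  shows "Der_bracket m (sd_to_der m (x, u)) (sd_to_der m (x', u')) y t =
    Hp_bracket m x (Hp_bracket m x' y) t + Hp_bracket m x (act (2*m) u' y) t
      + pairing (2*m) u t * Hp_bracket m x' y t + pairing (2*m) u t * (pairing (2*m) u' t * y t)
    - (Hp_bracket m x' (Hp_bracket m x y) t + Hp_bracket m x' (act (2*m) u y) t
      + pairing (2*m) u' t * Hp_bracket m x y t + pairing (2*m) u' t * (pairing (2*m) u t * y t))"
proof -
  let ?P = "sd_to_der m (x, u)" and ?Q = "sd_to_der m (x', u')"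
  have "Der_bracket m ?P ?Q y t = Hp_bracket m x (?Q y) t + pairing (2*m) u t * ?Q y t
      - (Hp_bracket m x' (?P y) t + pairing (2*m) u' t * ?P y t)"
    using y sd_to_der_closed[OF x y] sd_to_der_closed[OF x' y]
    by (simp add: Der_bracket_def sd_to_der_apply vadd_def vsmult_def act_def)
  then show ?thesis
    unfolding sd_to_der_apply[OF y] Hp_bracket_add_right[OF x Hp_bracket_closed[OF x' y] act_closed[OF y]]
      Hp_bracket_add_right[OF x' Hp_bracket_closed[OF x y] act_closed[OF y]]
    by (simp add: vadd_def act_def distrib_left)
qed

lemma sd_to_der_bracket:
  assumes p: "p \<in> SD_carrier m" and q: "q \<in> SD_carrier m"
  shows "sd_to_der m (SD_bracket m p q) = Der_bracket m (sd_to_der m p) (sd_to_der m q)"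
proof
  fix y
  obtain x u x' u' where pq: "p = (x, u)" "q = (x', u')" by (cases p, cases q)
  have x: "x \<in> Hp_carrier (2*m)" and x': "x' \<in> Hp_carrier (2*m)"
    using p q pq by (auto simp: SD_carrier_def)
  show "sd_to_der m (SD_bracket m p q) y = Der_bracket m (sd_to_der m p) (sd_to_der m q) y"
  proof (cases "y \<in> Hp_carrier (2*m)")
    case y: True
    have jacobi: "Hp_bracket m x (Hp_bracket m x' y) t =
        Hp_bracket m (Hp_bracket m x x') y t + Hp_bracket m x' (Hp_bracket m x y) t" for t
      using Hp_bracket_jacobi[OF x x' y] by (simp add: vadd_def)
    have derivation: "pairing (2*m) v t * Hp_bracket m z y t =
        Hp_bracket m (act (2*m) v z) y t + Hp_bracket m z (act (2*m) v y) t"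
      if "z \<in> Hp_carrier (2*m)" for z v t
      using fun_cong[OF act_bracket[OF that y, of v], of t] by (simp add: act_def vadd_def)
    show ?thesis
      unfolding pq fun_eq_iff sd_to_der_SD_bracket_at[OF x x' y] Der_bracket_sd_to_der_at[OF x x' y]
        jacobi derivation[OF x] derivation[OF x'] by (simp add: algebra_simps)
  qed (simp add: sd_to_der_def Der_bracket_def)
qed

lemma sd_to_der_hbasis:
  assumes "x \<in> Hp_carrier (2*m)" "r \<in> zvecs (2*m)" "r \<noteq> zero_vec"
  shows "sd_to_der m (x, u) (hbasis m r) (vec_plus a r) =
    of_int (symp m a r) * x a + (if a = zero_vec then pairing (2*m) u r else 0)"
  using assms by (simp add: sd_to_der_apply vadd_def Hp_bracket_hbasis_right act_def hbasis_shifted)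

lemma sd_to_der_inj:
  fixes p q :: "((nat \<Rightarrow> int) \<Rightarrow> 'k::field_char_0) \<times> (nat \<Rightarrow> 'k)"
  assumes p: "p \<in> SD_carrier m" and q: "q \<in> SD_carrier m" and eq: "sd_to_der m p = sd_to_der m q"
  shows "p = q"
proof -
  obtain x u x' u' where pq: "p = (x, u)" "q = (x', u')" by (cases p, cases q)
  have x: "x \<in> Hp_carrier (2*m)" and x': "x' \<in> Hp_carrier (2*m)"
    and u: "u \<in> hvecs (2*m)" and u': "u' \<in> hvecs (2*m)"
    using p q pq by (auto simp: SD_carrier_def)
  have coeff: "of_int (symp m a r) * x a + (if a = zero_vec then pairing (2*m) u r else 0) =
      of_int (symp m a r) * x' a + (if a = zero_vec then pairing (2*m) u' r else 0)"
    if "r \<in> zvecs (2*m)" "r \<noteq> zero_vec" for a r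
    using eq pq sd_to_der_hbasis[OF x that, of u a] sd_to_der_hbasis[OF x' that, of u' a] by simp
  have "u i = u' i" for i
  proof (cases "i < 2*m")
    case True
    then show ?thesis using coeff[of "unit_vec i" zero_vec] by (auto simp: pairing_unit_vec)
  qed (use u u' in \<open>simp add: hvecs_def\<close>)
  moreover have "x a = x' a" for a
  proof (cases "a \<in> zvecs (2*m) \<and> a \<noteq> zero_vec")
    case True
    then obtain j where "j < 2*m" "symp m a (unit_vec j) \<noteq> 0"
      using exists_symp_unit_vec_nonzero by blast
    then show ?thesis using coeff[of "unit_vec j" a] True by auto
  qed (use x x' in \<open>auto simp: Hp_carrier_zero_outside\<close>)
  ultimately show ?thesis using pq by (simp add: fun_eq_iff)
qed

section \<open>Two functional equations on the lattice\<close>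

lemma exists_symp_nonzero_on_finite:
  assumes "finite S" "S \<subseteq> zvecs (2*m) - {zero_vec}"
  shows "\<exists>w\<in>zvecs (2*m). \<forall>a\<in>S. symp m a w \<noteq> 0"
  using assms
proof (induction S rule: finite_induct)
  case empty
  then show ?case by (intro bexI[of _ zero_vec]) auto
next
  case (insert a S)
  then obtain w where w: "w \<in> zvecs (2*m)" "\<forall>b\<in>S. symp m b w \<noteq> 0" by auto
  have a: "a \<in> zvecs (2*m)" "a \<noteq> zero_vec" using insert.prems by auto
  show ?case
  proof (cases "symp m a w = 0")
    case False
    then show ?thesis using w by auto
  next
    case True
    obtain j where j: "j < 2*m" "symp m a (unit_vec j) \<noteq> 0"
      using exists_symp_unit_vec_nonzero[OF a] by blast
    \<comment> \<open>Move w along e_j, avoiding the finitely many steps k that create a zero.\<close>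
    define bad where "bad = insert 0 (\<Union>b\<in>S. {k::int. symp m b w + k * symp m b (unit_vec j) = 0})"
    have "finite {k::int. symp m b w + k * symp m b (unit_vec j) = 0}" if "b \<in> S" for b
    proof (cases "symp m b (unit_vec j) = 0")
      case True
      then show ?thesis using w that by simp
    next
      case False
      then have "{k::int. symp m b w + k * symp m b (unit_vec j) = 0} \<subseteq> {(- symp m b w) div symp m b (unit_vec j)}"
        by (auto simp: eq_neg_iff_add_eq_0[symmetric])
      then show ?thesis by (rule finite_subset) simp
    qed
    then have "finite bad" unfolding bad_def using insert.hyps(1) by auto
    then obtain k where k: "k \<notin> bad" using ex_new_if_finite[OF infinite_UNIV_int] by blast
    define w' where "w' = vec_plus w (vec_scale k (unit_vec j))"
    have "w' \<in> zvecs (2*m)" unfolding w'_def using w j by auto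
    moreover have "symp m b w' = symp m b w + k * symp m b (unit_vec j)" for b
      unfolding w'_def by (simp add: symp_add_right symp_scale_right)
    ultimately show ?thesis using True j k unfolding bad_def by (intro bexI[of _ w']) auto
  qed
qed

lemma symp_additive_imp_additive:
  fixes \<psi> :: "(nat \<Rightarrow> int) \<Rightarrow> 'a::ab_group_add"
  assumes add: "\<And>r s. r \<in> zvecs (2*m) \<Longrightarrow> s \<in> zvecs (2*m) \<Longrightarrow> symp m r s \<noteq> 0 \<Longrightarrow>
      \<psi> (vec_plus r s) = \<psi> r + \<psi> s"
    and zero: "\<psi> zero_vec = 0" and r: "r \<in> zvecs (2*m)" and s: "s \<in> zvecs (2*m)"
  shows "\<psi> (vec_plus r s) = \<psi> r + \<psi> s"
proof -
  consider "r = zero_vec" | "s = zero_vec" | "symp m r s \<noteq> 0"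
    | "r \<noteq> zero_vec" "s \<noteq> zero_vec" "vec_plus r s = zero_vec"
    | "r \<noteq> zero_vec" "s \<noteq> zero_vec" "vec_plus r s \<noteq> zero_vec" "symp m r s = 0"
    by blast
  then show ?thesis
  proof cases
    case 4
    \<comment> \<open>s = -r: route through a partner w of r, writing w = r + (w + s).\<close>
    obtain w where w: "w \<in> zvecs (2*m)" "symp m r w \<noteq> 0"
      using exists_symp_nonzero_on_finite[of "{r}" m] r 4 by auto
    have "symp m s w = - symp m r w"
      using symp_add_left[of m r s w] 4 by simp
    then have "\<psi> (vec_plus w s) = \<psi> w + \<psi> s"
      using add[OF w(1) s] w symp_antisym[of m s w] by simp
    moreover have "\<psi> (vec_plus r (vec_plus w s)) = \<psi> r + \<psi> (vec_plus w s)"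
      using add[OF r zvecs_plus[OF w(1) s]] w symp_eq_0_if_sum_zero[OF 4(3)]
      by (simp add: symp_add_right)
    moreover have "vec_plus r (vec_plus w s) = w"
      using 4 by (metis vec_plus_assoc vec_plus_commute vec_plus_zero(2))
    ultimately show ?thesis using 4 zero by simp
  next
    case 5
    \<comment> \<open>Route through a common partner w of r, s and r + s.\<close>
    have rs: "vec_plus r s \<in> zvecs (2*m)" using r s by auto
    obtain w where w: "w \<in> zvecs (2*m)" "symp m r w \<noteq> 0" "symp m s w \<noteq> 0" "symp m (vec_plus r s) w \<noteq> 0"
      using exists_symp_nonzero_on_finite[of "{r, s, vec_plus r s}" m] r s rs 5 by auto
    have "\<psi> (vec_plus s w) = \<psi> s + \<psi> w" using add[OF s w(1) w(3)] .
    moreover have "\<psi> (vec_plus r (vec_plus s w)) = \<psi> r + \<psi> (vec_plus s w)"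
      using add[OF r zvecs_plus[OF s w(1)]] w 5 by (simp add: symp_add_right)
    moreover have "\<psi> (vec_plus (vec_plus r s) w) = \<psi> (vec_plus r s) + \<psi> w" using add[OF rs w(1) w(4)] .
    ultimately show ?thesis by (simp add: vec_plus_assoc)
  qed (use add r s zero in auto)
qed

definition l1_norm :: "nat \<Rightarrow> (nat \<Rightarrow> int) \<Rightarrow> nat" where
  "l1_norm N r = (\<Sum>i<N. nat \<bar>r i\<bar>)"

lemma l1_norm_less:
  assumes "j < N" "\<And>i. i \<noteq> j \<Longrightarrow> r' i = r i" "\<bar>r' j\<bar> < \<bar>r j\<bar>"
  shows "l1_norm N r' < l1_norm N r"
proof -
  have j: "j \<in> {..<N}" using assms(1) by simp
  have "l1_norm N r' = nat \<bar>r' j\<bar> + (\<Sum>i\<in>{..<N} - {j}. nat \<bar>r' i\<bar>)"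
    unfolding l1_norm_def by (rule sum.remove[OF finite_lessThan j])
  also have "(\<Sum>i\<in>{..<N} - {j}. nat \<bar>r' i\<bar>) = (\<Sum>i\<in>{..<N} - {j}. nat \<bar>r i\<bar>)"
    using assms(2) by (intro sum.cong) auto
  also have "nat \<bar>r' j\<bar> + (\<Sum>i\<in>{..<N} - {j}. nat \<bar>r i\<bar>) < nat \<bar>r j\<bar> + (\<Sum>i\<in>{..<N} - {j}. nat \<bar>r i\<bar>)"
    using assms(3) by simp
  also have "\<dots> = l1_norm N r"
    unfolding l1_norm_def by (rule sum.remove[OF finite_lessThan j, symmetric])
  finally show ?thesis .
qed

lemma additive_zero_if_zero_on_unit_vecs:
  fixes \<psi> :: "(nat \<Rightarrow> int) \<Rightarrow> 'a::ab_group_add"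
  assumes add: "\<And>r s. r \<in> zvecs N \<Longrightarrow> s \<in> zvecs N \<Longrightarrow> \<psi> (vec_plus r s) = \<psi> r + \<psi> s"
    and units: "\<And>j. j < N \<Longrightarrow> \<psi> (unit_vec j) = 0"
    and r: "r \<in> zvecs N"
  shows "\<psi> r = 0"
  using r
proof (induction "l1_norm N r" arbitrary: r rule: less_induct)
  case less
  have zero: "\<psi> zero_vec = 0" using add[of zero_vec zero_vec] by simp
  show ?case
  proof (cases "r = zero_vec")
    case False
    then obtain j where rj: "r j \<noteq> 0" by (auto simp: zero_vec_def fun_eq_iff)
    have j: "j < N" using nonzero_coord_less[OF less.prems rj] .
    define e where "e = (if r j > 0 then unit_vec j else vec_neg (unit_vec j))"
    have e: "e \<in> zvecs N" unfolding e_def using j by auto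
    have "\<psi> (vec_plus (unit_vec j) (vec_neg (unit_vec j))) = \<psi> (unit_vec j) + \<psi> (vec_neg (unit_vec j))"
      using add j by blast
    then have "\<psi> e = 0" using zero units[OF j] by (simp add: e_def vec_plus_neg_self)
    define r' where "r' = vec_plus r (vec_neg e)"
    have r': "r' \<in> zvecs N" unfolding r'_def using less.prems e by auto
    have "l1_norm N r' < l1_norm N r"
      using j rj by (intro l1_norm_less) (auto simp: r'_def e_def vec_plus_def vec_neg_def unit_vec_def)
    then have "\<psi> r' = 0" using less.hyps r' by blast
    moreover have "r = vec_plus r' e" unfolding r'_def by (simp add: vec_plus_neg_cancel)
    ultimately show ?thesis using add[OF r' e] \<open>\<psi> e = 0\<close> by simp
  qed (use zero in simp)
qed

lemma two_step_ratio_zero: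
  fixes A B X Y Z :: "'k::field"
  assumes "A \<noteq> 0" "B \<noteq> 0"
    and "B * Y = X * (B - A)" "B * Z = Y * (B - A)" "B * Z = X * (B - A)"
  shows "Y = 0"
proof (cases "B = A")
  case False
  then have "X = Y" using assms(4,5) by simp
  then have "X * A = 0" using assms(3) by (simp add: algebra_simps)
  then show ?thesis using assms(1-3) \<open>X = Y\<close> by simp
qed (use assms in simp)

text \<open>The hypothesis is the equation satisfied by r |-> c_r(a) - x_a (abar, r), where c_r(a) is the
  coefficient of h_(r+a) in D h_r.\<close>

lemma degree_equation_zero_if_zero_at:
  fixes h :: "(nat \<Rightarrow> int) \<Rightarrow> 'k::field_char_0"
  assumes eq: "\<And>r s. r \<in> zvecs (2*m) \<Longrightarrow> s \<in> zvecs (2*m) \<Longrightarrow>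
      of_int (symp m r s) * h (vec_plus r s) =
      h r * of_int (symp m r s + symp m a s) + h s * of_int (symp m r s + symp m r a)"
    and e: "e \<in> zvecs (2*m)" "symp m a e \<noteq> 0" "h e = 0"
    and s: "s \<in> zvecs (2*m)"
  shows "h s = 0"
proof -
  define c where "c = symp m a e"
  have c: "(of_int c :: 'k) \<noteq> 0" using e c_def by simp
  have ea: "symp m e a = - c" using c_def symp_antisym by metis
  have orth: "h s = 0" if "s \<in> zvecs (2*m)" "symp m e s = 0" for s
    using eq[OF e(1) that(1)] that(2) e(3) ea c by simp
  have ee: "vec_plus e e \<in> zvecs (2*m)" using e by auto
  have hee: "h (vec_plus e e) = 0" using orth[OF ee] by (simp add: symp_add_right)
  have shifted: "h (vec_plus e s) = 0" if s: "s \<in> zvecs (2*m)" "symp m e s \<noteq> 0" for s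
  proof (rule two_step_ratio_zero)
    define b where "b = symp m e s"
    show "(of_int c :: 'k) \<noteq> 0" "(of_int b :: 'k) \<noteq> 0" using c s b_def by simp_all
    show "of_int b * h (vec_plus e s) = h s * (of_int b - of_int c)"
      using eq[OF e(1) s(1)] e(3) ea unfolding b_def by simp
    show "of_int b * h (vec_plus e (vec_plus e s)) = h (vec_plus e s) * (of_int b - of_int c)"
      using eq[OF e(1) zvecs_plus[OF e(1) s(1)]] e(3) ea unfolding b_def by (simp add: symp_add_right)
    have "2 * (of_int b * h (vec_plus e (vec_plus e s))) = 2 * (h s * (of_int b - of_int c))"
      using eq[OF ee s(1)] hee unfolding b_def
      by (simp add: symp_add_left ea vec_plus_assoc algebra_simps)
    then show "of_int b * h (vec_plus e (vec_plus e s)) = h s * (of_int b - of_int c)" by simp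
  qed
  show ?thesis
  proof (cases "symp m e s = 0")
    case False
    define s' where "s' = vec_plus s (vec_neg e)"
    have s': "s' \<in> zvecs (2*m)" "vec_plus e s' = s"
      using s e by (auto simp: s'_def vec_plus_commute[of e] vec_plus_neg_cancel)
    then have "symp m e s' = symp m e s"
      using symp_add_right[of m e e s'] by (simp add: vec_plus_commute[of e])
    then show ?thesis using shifted[OF s'(1)] s' False by simp
  qed (use orth s in blast)
qed

section \<open>Classification of the derivations of H'_N\<close>

lemma Der_Hp_closed: "D \<in> Der_Hp m \<Longrightarrow> x \<in> Hp_carrier (2*m) \<Longrightarrow> D x \<in> Hp_carrier (2*m)"
  unfolding Der_Hp_def by blast

lemma Der_Hp_Leibniz: "D \<in> Der_Hp m \<Longrightarrow> x \<in> Hp_carrier (2*m) \<Longrightarrow> y \<in> Hp_carrier (2*m) \<Longrightarrow>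
  D (Hp_bracket m x y) = vadd (Hp_bracket m (D x) y) (Hp_bracket m x (D y))"
  unfolding Der_Hp_def by blast

lemma Der_Hp_linear: "D \<in> Der_Hp m \<Longrightarrow> Hp_linear m D"
  unfolding Der_Hp_def Hp_linear_def by blast

lemma Der_Hp_extensional: "D \<in> Der_Hp m \<Longrightarrow> D \<in> extensional (Hp_carrier (2*m))"
  unfolding Der_Hp_def by blast

lemma Der_Hp_hbasis_coeff_eq:
  assumes D: "D \<in> Der_Hp m" and r: "r \<in> zvecs (2*m)" and s: "s \<in> zvecs (2*m)"
  shows "of_int (symp m r s) * D (hbasis m (vec_plus r s)) (vec_plus (vec_plus r s) a) =
     D (hbasis m r) (vec_plus r a) * of_int (symp m r s + symp m a s) +
     D (hbasis m s) (vec_plus s a) * of_int (symp m r s + symp m r a)"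
proof -
  let ?Dr = "D (hbasis m r)" and ?Ds = "D (hbasis m s)" and ?t = "vec_plus (vec_plus r s) a"
  have "D (vsmult c (hbasis m (vec_plus r s))) = vsmult c (D (hbasis m (vec_plus r s)))" for c
    using Der_Hp_linear[OF D] unfolding Hp_linear_def by blast
  then have "vsmult (of_int (symp m r s)) (D (hbasis m (vec_plus r s))) =
      vadd (Hp_bracket m ?Dr (hbasis m s)) (Hp_bracket m (hbasis m r) ?Ds)"
    using Der_Hp_Leibniz[OF D hbasis_in_Hp[of m r] hbasis_in_Hp[of m s]]
    unfolding Hp_bracket_hbasis_hbasis[OF r s] by simp
  then have "of_int (symp m r s) * D (hbasis m (vec_plus r s)) ?t =
      Hp_bracket m ?Dr (hbasis m s) ?t + Hp_bracket m (hbasis m r) ?Ds ?t"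
    by (simp add: vadd_def vsmult_def fun_eq_iff)
  also have "\<dots> = of_int (symp m (vec_plus r a) s) * ?Dr (vec_plus r a) +
      of_int (symp m r (vec_plus s a)) * ?Ds (vec_plus s a)"
  proof -
    have t: "?t = vec_plus (vec_plus r a) s" and t': "?t = vec_plus r (vec_plus s a)"
      by (simp_all add: vec_plus_def algebra_simps)
    have "Hp_bracket m ?Dr (hbasis m s) ?t = of_int (symp m (vec_plus r a) s) * ?Dr (vec_plus r a)"
      unfolding t by (rule Hp_bracket_hbasis_right[OF Der_Hp_closed[OF D hbasis_in_Hp] s])
    moreover have "Hp_bracket m (hbasis m r) ?Ds ?t = of_int (symp m r (vec_plus s a)) * ?Ds (vec_plus s a)"
      unfolding t' by (rule Hp_bracket_hbasis_left[OF Der_Hp_closed[OF D hbasis_in_Hp] r])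
    ultimately show ?thesis by simp
  qed
  finally show ?thesis by (simp add: symp_add_left symp_add_right algebra_simps)
qed

definition der_weight :: "nat \<Rightarrow> (((nat \<Rightarrow> int) \<Rightarrow> 'k::field) \<Rightarrow> ((nat \<Rightarrow> int) \<Rightarrow> 'k)) \<Rightarrow> nat \<Rightarrow> 'k" where
  "der_weight m D i = (if i < 2*m then D (hbasis m (unit_vec i)) (unit_vec i) else 0)"

definition symp_partner :: "nat \<Rightarrow> (nat \<Rightarrow> int) \<Rightarrow> nat" where
  "symp_partner m a = (SOME j. j < 2*m \<and> symp m a (unit_vec j) \<noteq> 0)"

text \<open>x_a is read off from the coefficient of h_(e_j + a) in D h_(e_j), for the partner e_j of a.\<close>

definition der_inner ::
  "nat \<Rightarrow> (((nat \<Rightarrow> int) \<Rightarrow> 'k::field) \<Rightarrow> ((nat \<Rightarrow> int) \<Rightarrow> 'k)) \<Rightarrow> (nat \<Rightarrow> int) \<Rightarrow> 'k" where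
  "der_inner m D a =
    (if a \<in> zvecs (2*m) \<and> a \<noteq> zero_vec then
       D (hbasis m (unit_vec (symp_partner m a))) (vec_plus (unit_vec (symp_partner m a)) a)
         / of_int (symp m a (unit_vec (symp_partner m a)))
     else 0)"

lemma symp_partner_spec:
  assumes "a \<in> zvecs (2*m)" "a \<noteq> zero_vec"
  shows "symp_partner m a < 2*m" "symp m a (unit_vec (symp_partner m a)) \<noteq> 0"
  using someI_ex[OF exists_symp_unit_vec_nonzero[OF assms]] unfolding symp_partner_def by auto

lemma Der_Hp_diagonal_coeff:
  fixes D :: "((nat \<Rightarrow> int) \<Rightarrow> 'k::field_char_0) \<Rightarrow> ((nat \<Rightarrow> int) \<Rightarrow> 'k)"
  assumes D: "D \<in> Der_Hp m" and r: "r \<in> zvecs (2*m)"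
  shows "D (hbasis m r) r = pairing (2*m) (der_weight m D) r"
proof -
  define \<psi> where "\<psi> v = D (hbasis m v) v - pairing (2*m) (der_weight m D) v" for v
  have zero: "\<psi> zero_vec = 0"
    unfolding \<psi>_def using Der_Hp_closed[OF D hbasis_in_Hp[of m zero_vec]] by simp
  have symp_add: "\<psi> (vec_plus a b) = \<psi> a + \<psi> b"
    if "a \<in> zvecs (2*m)" "b \<in> zvecs (2*m)" "symp m a b \<noteq> 0" for a b
  proof -
    have "of_int (symp m a b) * D (hbasis m (vec_plus a b)) (vec_plus a b) =
        of_int (symp m a b) * (D (hbasis m a) a + D (hbasis m b) b)"
      using Der_Hp_hbasis_coeff_eq[OF D that(1,2), of zero_vec] by (simp add: algebra_simps)
    then show ?thesis using that(3) unfolding \<psi>_def by (simp add: pairing_add)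
  qed
  have add: "\<psi> (vec_plus a b) = \<psi> a + \<psi> b" if "a \<in> zvecs (2*m)" "b \<in> zvecs (2*m)" for a b
    by (rule symp_additive_imp_additive[OF symp_add zero that])
  have units: "\<psi> (unit_vec j) = 0" if "j < 2*m" for j
    using that by (simp add: \<psi>_def pairing_unit_vec der_weight_def)
  have "\<psi> r = 0" by (rule additive_zero_if_zero_on_unit_vecs[OF add units r])
  then show ?thesis unfolding \<psi>_def by simp
qed

lemma symp_inner_coeff_identity:
  "symp m r s * symp m a (vec_plus r s) =
   symp m a r * (symp m r s + symp m a s) + symp m a s * (symp m r s + symp m r a)"
  by (simp add: symp_add_right symp_antisym[of m r a] algebra_simps)

lemma Der_Hp_offdiagonal_coeff:
  fixes D :: "((nat \<Rightarrow> int) \<Rightarrow> 'k::field_char_0) \<Rightarrow> ((nat \<Rightarrow> int) \<Rightarrow> 'k)"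
  assumes D: "D \<in> Der_Hp m" and a: "a \<in> zvecs (2*m)" "a \<noteq> zero_vec" and r: "r \<in> zvecs (2*m)"
  shows "D (hbasis m r) (vec_plus r a) = der_inner m D a * of_int (symp m a r)"
proof -
  define h where "h v = D (hbasis m v) (vec_plus v a) - der_inner m D a * of_int (symp m a v)" for v
  have "h r = 0"
  proof (rule degree_equation_zero_if_zero_at[where a = a and e = "unit_vec (symp_partner m a)"])
    fix v w assume v: "v \<in> zvecs (2*m)" and w: "w \<in> zvecs (2*m)"
    have "(of_int (symp m v w) * of_int (symp m a (vec_plus v w)) :: 'k) =
      of_int (symp m a v) * of_int (symp m v w + symp m a w) +
      of_int (symp m a w) * of_int (symp m v w + symp m v a)"
      using arg_cong[OF symp_inner_coeff_identity[of m v w a], of "of_int :: int \<Rightarrow> 'k"] by simp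
    then show "of_int (symp m v w) * h (vec_plus v w) =
        h v * of_int (symp m v w + symp m a w) + h w * of_int (symp m v w + symp m v a)"
      unfolding h_def using Der_Hp_hbasis_coeff_eq[OF D v w, of a] by (simp add: algebra_simps)
  next
    show "unit_vec (symp_partner m a) \<in> zvecs (2*m)" "symp m a (unit_vec (symp_partner m a)) \<noteq> 0"
      using symp_partner_spec[OF a] by auto
    then show "h (unit_vec (symp_partner m a)) = 0" unfolding h_def der_inner_def using a by simp
  qed (use r in auto)
  then show ?thesis unfolding h_def by simp
qed

lemma der_inner_in_Hp:
  assumes D: "D \<in> Der_Hp m"
  shows "der_inner m D \<in> Hp_carrier (2*m)"
proof (rule Hp_carrierI)
  have "{a. der_inner m D a \<noteq> 0} \<subseteq> (\<Union>j<2*m. vec_plus (unit_vec j) -` {t. D (hbasis m (unit_vec j)) t \<noteq> 0})"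
  proof
    fix a assume "a \<in> {a. der_inner m D a \<noteq> 0}"
    then have a: "a \<in> zvecs (2*m)" "a \<noteq> zero_vec"
      and "D (hbasis m (unit_vec (symp_partner m a))) (vec_plus (unit_vec (symp_partner m a)) a) \<noteq> 0"
      unfolding der_inner_def by (auto split: if_splits)
    then show "a \<in> (\<Union>j<2*m. vec_plus (unit_vec j) -` {t. D (hbasis m (unit_vec j)) t \<noteq> 0})"
      using symp_partner_spec[OF a] by auto
  qed
  moreover have "finite (vec_plus (unit_vec j) -` {t. D (hbasis m (unit_vec j)) t \<noteq> 0})" for j
    by (rule finite_vimageI[OF Hp_carrier_finite[OF Der_Hp_closed[OF D hbasis_in_Hp]]]) (simp add: inj_def)
  ultimately show "finite {a. der_inner m D a \<noteq> 0}" by (meson finite_UN_I finite_lessThan finite_subset)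
qed (auto simp: der_inner_def split: if_splits)

lemma Der_Hp_hbasis_eq_sd_to_der:
  fixes D :: "((nat \<Rightarrow> int) \<Rightarrow> 'k::field_char_0) \<Rightarrow> ((nat \<Rightarrow> int) \<Rightarrow> 'k)"
  assumes D: "D \<in> Der_Hp m" and r: "r \<in> zvecs (2*m)" "r \<noteq> zero_vec"
  shows "D (hbasis m r) = sd_to_der m (der_inner m D, der_weight m D) (hbasis m r)"
proof
  fix t
  have x: "der_inner m D \<in> Hp_carrier (2*m)" using der_inner_in_Hp[OF D] .
  obtain a where t: "t = vec_plus a r" using vec_plus_neg_cancel by metis
  have "D (hbasis m r) (vec_plus a r) =
      of_int (symp m a r) * der_inner m D a + (if a = zero_vec then pairing (2*m) (der_weight m D) r else 0)"
  proof (cases "a = zero_vec")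
    case True
    then show ?thesis using Der_Hp_diagonal_coeff[OF D r(1)] by simp
  next
    case False
    show ?thesis
    proof (cases "a \<in> zvecs (2*m)")
      case True
      then show ?thesis using Der_Hp_offdiagonal_coeff[OF D True False r(1)] False
        by (simp add: vec_plus_commute)
    next
      case outside: False
      then have "vec_plus a r \<notin> zvecs (2*m)" using r zvecs_plus_cancel by blast
      then show ?thesis using outside False x
        by (simp add: Hp_carrier_zero_outside[OF Der_Hp_closed[OF D hbasis_in_Hp]] Hp_carrier_zero_outside)
    qed
  qed
  then show "D (hbasis m r) t = sd_to_der m (der_inner m D, der_weight m D) (hbasis m r) t"
    unfolding t using sd_to_der_hbasis[OF x r] by simp
qed

lemma Der_Hp_eq_sd_to_der:
  fixes D :: "((nat \<Rightarrow> int) \<Rightarrow> 'k::field_char_0) \<Rightarrow> ((nat \<Rightarrow> int) \<Rightarrow> 'k)"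
  assumes D: "D \<in> Der_Hp m"
  shows "D = sd_to_der m (der_inner m D, der_weight m D)"
proof
  fix y
  show "D y = sd_to_der m (der_inner m D, der_weight m D) y"
  proof (cases "y \<in> Hp_carrier (2*m)")
    case True
    show ?thesis
      by (rule Hp_linear_eq_on_basis[OF Der_Hp_linear[OF D] Hp_linear_sd_to_der[OF der_inner_in_Hp[OF D]]
            Der_Hp_hbasis_eq_sd_to_der[OF D] True])
  qed (use Der_Hp_extensional[OF D] in \<open>simp add: sd_to_der_def extensional_def\<close>)
qed

lemma lie_iso_inv_into:
  assumes iso: "lie_iso A addA smA brA B addB smB brB f"
    and closed: "\<forall>x\<in>A. \<forall>y\<in>A. addA x y \<in> A" "\<forall>c. \<forall>x\<in>A. smA c x \<in> A" "\<forall>x\<in>A. \<forall>y\<in>A. brA x y \<in> A"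
  shows "lie_iso B addB smB brB A addA smA brA (inv_into A f)"
proof -
  have bij: "bij_betw f A B" using iso unfolding lie_iso_def by blast
  let ?g = "inv_into A f"
  have g: "?g b \<in> A" "f (?g b) = b" if "b \<in> B" for b
    using that bij by (auto simp: bij_betw_def inv_into_into f_inv_into_f)
  have gf: "?g (f a) = a" if "a \<in> A" for a
    using that bij by (simp add: bij_betw_def)
  have hom: "\<forall>x\<in>A. \<forall>y\<in>A. f (addA x y) = addB (f x) (f y)"
    "\<forall>c. \<forall>x\<in>A. f (smA c x) = smB c (f x)"
    "\<forall>x\<in>A. \<forall>y\<in>A. f (brA x y) = brB (f x) (f y)"
    using iso unfolding lie_iso_def by blast+
  show ?thesis unfolding lie_iso_def
  proof (intro conjI ballI allI)
    show "bij_betw ?g B A" using bij by (rule bij_betw_inv_into)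
  next
    fix a b assume "a \<in> B" "b \<in> B"
    then show "?g (addB a b) = addA (?g a) (?g b)" "?g (brB a b) = brA (?g a) (?g b)"
      using hom closed g gf by (metis (no_types, lifting))+
  next
    fix c a assume "a \<in> B"
    then show "?g (smB c a) = smA c (?g a)"
      using hom closed g gf by metis
  qed
qed

lemma SD_carrier_closed:
  fixes m :: nat and S :: "(((nat \<Rightarrow> int) \<Rightarrow> 'k::field) \<times> (nat \<Rightarrow> 'k)) set"
  defines "S \<equiv> SD_carrier m"
  shows "\<forall>p\<in>S. \<forall>q\<in>S. pair_add p q \<in> S" "\<forall>c. \<forall>p\<in>S. pair_smult c p \<in> S"
    "\<forall>p\<in>S. \<forall>q\<in>S. SD_bracket m p q \<in> S"
proof -
  have h: "vadd u v \<in> hvecs (2*m)" "vsmult c u \<in> hvecs (2*m)"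
    if "u \<in> hvecs (2*m)" "v \<in> hvecs (2*m)" for u v :: "nat \<Rightarrow> 'k" and c
    using that by (auto simp: hvecs_def vadd_def vsmult_def)
  show "\<forall>p\<in>S. \<forall>q\<in>S. pair_add p q \<in> S" "\<forall>c. \<forall>p\<in>S. pair_smult c p \<in> S"
    using h by (auto simp: S_def SD_carrier_def pair_add_def pair_smult_def)
  show "\<forall>p\<in>S. \<forall>q\<in>S. SD_bracket m p q \<in> S"
    by (auto simp: S_def SD_carrier_def SD_bracket_def semidirect_bracket_def hvecs_def)
qed

lemma Der_Hp_in_range_sd_to_der:
  fixes D :: "((nat \<Rightarrow> int) \<Rightarrow> 'k::field_char_0) \<Rightarrow> ((nat \<Rightarrow> int) \<Rightarrow> 'k)"
  assumes D: "D \<in> Der_Hp m"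
  shows "D \<in> sd_to_der m ` SD_carrier m"
proof -
  have "(der_inner m D, der_weight m D) \<in> SD_carrier m"
    using der_inner_in_Hp[OF D] by (simp add: SD_carrier_def hvecs_def der_weight_def)
  then show ?thesis using Der_Hp_eq_sd_to_der[OF D] by blast
qed

lemma sd_to_der_bij:
  "bij_betw (sd_to_der m) (SD_carrier m :: (((nat \<Rightarrow> int) \<Rightarrow> 'k::field_char_0) \<times> (nat \<Rightarrow> 'k)) set)
     (Der_Hp m)"
  unfolding bij_betw_def
  using sd_to_der_inj sd_to_der_in_Der Der_Hp_in_range_sd_to_der by (blast intro: inj_onI)

lemma sd_to_der_lie_iso:
  "lie_iso (SD_carrier m :: (((nat \<Rightarrow> int) \<Rightarrow> 'k::field_char_0) \<times> (nat \<Rightarrow> 'k)) set)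
     pair_add pair_smult (SD_bracket m) (Der_Hp m) (Der_add m) (Der_smult m) (Der_bracket m) (sd_to_der m)"
  unfolding lie_iso_def by (simp add: sd_to_der_bij sd_to_der_add sd_to_der_smult sd_to_der_bracket)

lemma SD_bracket_eq_Ham_bracket: "SD_bracket m = Ham_bracket m"
  by (simp add: SD_bracket_def Ham_bracket_def semidirect_bracket_def vadd_def vsmult_def act_def
      fun_eq_iff algebra_simps)

theorem theorem4p5:
  fixes m :: nat
  assumes "alg_closed TYPE('k::field_char_0)"
    and "m \<ge> 1"
  shows "(\<exists>\<phi>. lie_iso (Der_Hp m :: (((nat \<Rightarrow> int) \<Rightarrow> 'k) \<Rightarrow> ((nat \<Rightarrow> int) \<Rightarrow> 'k)) set)
                  (Der_add m) (Der_smult m) (Der_bracket m)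
                  (SD_carrier m) pair_add pair_smult (SD_bracket m) \<phi>)
       \<and> (\<exists>\<psi>. lie_iso (SD_carrier m :: (((nat \<Rightarrow> int) \<Rightarrow> 'k) \<times> (nat \<Rightarrow> 'k)) set)
                  pair_add pair_smult (SD_bracket m)
                  (Ham_carrier m) pair_add pair_smult (Ham_bracket m) \<psi>)"
proof
  show "\<exists>\<phi>. lie_iso (Der_Hp m :: (((nat \<Rightarrow> int) \<Rightarrow> 'k) \<Rightarrow> ((nat \<Rightarrow> int) \<Rightarrow> 'k)) set)
      (Der_add m) (Der_smult m) (Der_bracket m) (SD_carrier m) pair_add pair_smult (SD_bracket m) \<phi>"
    using lie_iso_inv_into[OF sd_to_der_lie_iso SD_carrier_closed] by blast
  have "lie_iso (SD_carrier m :: (((nat \<Rightarrow> int) \<Rightarrow> 'k) \<times> (nat \<Rightarrow> 'k)) set) pair_add pair_smult (SD_bracket m)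
      (Ham_carrier m) pair_add pair_smult (Ham_bracket m) id"
    by (simp add: lie_iso_def SD_bracket_eq_Ham_bracket SD_carrier_def Ham_carrier_def)
  then show "\<exists>\<psi>. lie_iso (SD_carrier m :: (((nat \<Rightarrow> int) \<Rightarrow> 'k) \<times> (nat \<Rightarrow> 'k)) set)
      pair_add pair_smult (SD_bracket m) (Ham_carrier m) pair_add pair_smult (Ham_bracket m) \<psi>" by blast
qed

end
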